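(* Let $B>0$, let $\mathscr{F}:[0,\infty)\to[0,1]$ be a survival function (nonincreasing, $\mathscr{F}(0)=1$), and let $A:[0,\infty)\to[0,\infty)$ be an infectivity function, such that \[ R:=f(0)\;=\;B\int_0^\infty\!\!\int_0^\infty \mathscr{F}(a+\tau)\,A(\tau)\,d\tau\,da \] is finite and satisfies $f(0)>1$. For $\theta\in(0,1]$ and $p>0$ let $F(\theta,p)$ denote the unique positive solution $x$ of \[ 1=\frac{B}{1+p-\theta}\int_0^\infty\!\!\int_0^\infty\Big(p\theta e^{-\theta a x}+(1+p)(1-\theta)e^{-(1+p)a x}\Big)\mathscr{F}(a+\tau)A(\tau)\,d\tau\,da, \] and let $F^*$ denote the unique positive solution $x$ of $1=B\int_0^\infty\int_0^\infty e^{-a x}\mathscr{F}(a+\tau)A(\tau)\,d\tau\,da$. Assume that for each $\theta\in(0,1]$ the limit $F(\theta,+\infty):=\lim_{p\to\infty}F(\theta,p)$ exists. Then \[ F(\theta,+\infty)=0 \ \text{ if } 0<\theta\le \tfrac{1}{f(0)}, \qquad F(\theta,+\infty)\neq 0 \ \text{ if } \tfrac{1}{f(0)}<\theta<1, \qquad F(1,+\infty)=F^*. \] Moreover, on the interval $\left(\frac{1}{f(0)},1\right)$ the function $\theta\mapsto F(\theta,+\infty)$ is increasing and satisfies $0<F(\theta,+\infty)<F^*$.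
   Context: This is an age-structured SIR-type epidemic model with vaccination: $B$ is a constant birth rate, $\mathscr{F}(a)$ is the probability of surviving to age $a$, $A(\tau)$ is the expected contribution to the force of infection of an individual infected $\tau$ time units ago, $\theta\in[0,1]$ is the vaccine parameter (vaccinated susceptibles are infected at rate $\theta$ times the force of infection), and the vaccination rate is $p$ times the force of infection. $F(\theta,p)$ is the endemic (steady-state) force of infection and $F^*$ is the endemic force of infection without vaccination; $f(0)$ is the basic reproduction number. *)

theory Defs
  imports "HOL-Analysis.Analysis"
begin

definition dbl :: "(real \<Rightarrow> real) \<Rightarrow> (real \<Rightarrow> real) \<Rightarrow> (real \<Rightarrow> real) \<Rightarrow> real" where
  "dbl Fs A w = (LBINT a:{0..}. (LBINT \<tau>:{0..}. w a * Fs (a + \<tau>) * A \<tau>))"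

definition f0 :: "real \<Rightarrow> (real \<Rightarrow> real) \<Rightarrow> (real \<Rightarrow> real) \<Rightarrow> real" where
  "f0 B Fs A = B * dbl Fs A (\<lambda>_. 1)"

definition Fvac :: "real \<Rightarrow> (real \<Rightarrow> real) \<Rightarrow> (real \<Rightarrow> real) \<Rightarrow> real \<Rightarrow> real \<Rightarrow> real" where
  "Fvac B Fs A \<theta> p = (THE x. x > 0 \<and>
     1 = B / (1 + p - \<theta>) * dbl Fs A (\<lambda>a. p * \<theta> * exp (- \<theta> * a * x)
              + (1 + p) * (1 - \<theta>) * exp (- (1 + p) * a * x)))"

definition Fstar :: "real \<Rightarrow> (real \<Rightarrow> real) \<Rightarrow> (real \<Rightarrow> real) \<Rightarrow> real" where
  "Fstar B Fs A = (THE x. x > 0 \<and> 1 = B * dbl Fs A (\<lambda>a. exp (- a * x)))"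

end

theory Submission
  imports Defs
begin

text \<open>
  Write \<open>B \<cdot> dbl Fs A w = \<integral> w(a) k(a) da\<close> with the kernel
  \<open>k(a) = B \<integral>\<^sub>0\<^sup>\<infinity> Fs(a+\<tau>) A(\<tau>) d\<tau>\<close> on \<open>a \<ge> 0\<close>: it is integrable with integral \<open>f(0)\<close>
  and nonincreasing on \<open>(0,\<infinity>)\<close>. With the Laplace transform \<open>\<phi>\<close> of \<open>k\<close>, which decreases
  strictly and continuously from \<open>f(0)\<close> to \<open>0\<close>, the endemic equation becomes
  \<open>(p\<theta> \<phi>(\<theta>x) + (1+p)(1-\<theta>) \<phi>((1+p)x)) / (1+p-\<theta>) = 1\<close>, which has exactly one positive root.
  As \<open>p \<rightarrow> \<infinity>\<close> the coefficients tend to \<open>\<theta>\<close> and \<open>1-\<theta>\<close>, and \<open>\<phi>((1+p)x) \<rightarrow> 0\<close> when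
  \<open>x\<close> tends to a positive limit \<open>L\<close>; so either \<open>L = 0\<close> and \<open>\<theta> f(0) \<le> 1\<close>, or \<open>L > 0\<close> and
  \<open>\<theta> \<phi>(\<theta>L) = 1\<close>. In the second case \<open>L = \<psi>(\<theta>L)\<close> with \<open>\<psi>(y) = y \<phi>(y) = \<integral> e\<^sup>-\<^sup>u k(u/y) du\<close>,
  which is strictly increasing because \<open>k\<close> is nonincreasing. As \<open>\<phi>(\<theta>L) = 1/\<theta>\<close> makes
  \<open>\<theta>L\<close> increase with \<open>\<theta>\<close>, so does \<open>L\<close>; and \<open>\<theta> = 1\<close> is the equation for \<open>F\<^sup>*\<close>.
\<close>

lemma tendsto_shifted_ratio_at_top: "((\<lambda>p::real. (p + a) / (p + b)) \<longlongrightarrow> 1) at_top"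
proof -
  have "filterlim (\<lambda>p::real. b + p) at_top at_top"
    by (rule filterlim_tendsto_add_at_top[OF tendsto_const filterlim_ident])
  then have "((\<lambda>p::real. 1 + (a - b) / (p + b)) \<longlongrightarrow> 1 + 0) at_top"
    by (intro tendsto_add tendsto_const tendsto_divide_0[OF tendsto_const]
        filterlim_at_top_imp_at_infinity) (simp add: add.commute)
  moreover have "\<forall>\<^sub>F p in at_top. 1 + (a - b) / (p + b) = (p + a) / (p + b)"
    using eventually_gt_at_top[of "- b"] by eventually_elim (simp add: field_simps)
  ultimately show ?thesis
    by (simp add: tendsto_cong)
qed

lemma vaccination_coefficients_tendsto:
  "((\<lambda>p::real. p * \<theta> / (1 + p - \<theta>)) \<longlongrightarrow> \<theta>) at_top"
  "((\<lambda>p::real. (1 + p) * (1 - \<theta>) / (1 + p - \<theta>)) \<longlongrightarrow> 1 - \<theta>) at_top"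
  using tendsto_mult_left[OF tendsto_shifted_ratio_at_top[of 0 "1 - \<theta>"], of \<theta>]
    tendsto_mult_left[OF tendsto_shifted_ratio_at_top[of 1 "1 - \<theta>"], of "1 - \<theta>"]
  by (simp_all add: algebra_simps)

lemma filterlim_scale_at_top: "0 < c \<Longrightarrow> filterlim (\<lambda>x::real. c * x) at_top at_top"
  by (rule filterlim_tendsto_pos_mult_at_top[OF tendsto_const _ filterlim_ident])

lemma integral_less_if_not_AE_eq:
  fixes f g :: "'a \<Rightarrow> real"
  assumes f: "integrable M f" and g: "integrable M g" and le: "\<And>x. f x \<le> g x"
    and not_eq: "\<not> (AE x in M. f x = g x)"
  shows "integral\<^sup>L M f < integral\<^sup>L M g"
proof -
  have "integral\<^sup>L M f \<le> integral\<^sup>L M g"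
    using f g le by (rule integral_mono)
  moreover have "integral\<^sup>L M f \<noteq> integral\<^sup>L M g"
  proof
    assume "integral\<^sup>L M f = integral\<^sup>L M g"
    then have "integral\<^sup>L M (\<lambda>x. g x - f x) = 0"
      using f g by simp
    then have "AE x in M. g x - f x = 0"
      using integral_nonneg_eq_0_iff_AE[of M "\<lambda>x. g x - f x"] f g le by auto
    then have "AE x in M. f x = g x"
      by eventually_elim simp
    with not_eq show False
      by simp
  qed
  ultimately show ?thesis
    by simp
qed

lemma ex1_crossing_strict_decreasing:
  fixes g :: "real \<Rightarrow> real"
  assumes cont: "continuous_on {0..} g"
    and decr: "\<And>x y. 0 \<le> x \<Longrightarrow> x < y \<Longrightarrow> g y < g x"
    and start: "c < g 0" and lim: "(g \<longlongrightarrow> d) at_top" and "d < c"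
  shows "\<exists>!x. x > 0 \<and> c = g x"
proof -
  obtain N where N: "\<And>x. x \<ge> N \<Longrightarrow> g x < c"
    using order_tendstoD(2)[OF lim \<open>d < c\<close>] by (auto simp: eventually_at_top_linorder)
  define X where "X = max 0 N"
  have "continuous_on {0..X} g"
    using cont by (rule continuous_on_subset) auto
  moreover have "g X < c" "0 \<le> X"
    using N by (simp_all add: X_def)
  ultimately obtain x where x: "0 \<le> x" "x \<le> X" "g x = c"
    using IVT2'[of g X c 0] start by auto
  with start have x_pos: "x > 0"
    by (cases "x = 0") auto
  show ?thesis
  proof (rule ex1I[of _ x])
    fix z assume z: "z > 0 \<and> c = g z"
    show "z = x"
    proof (rule ccontr)
      assume "z \<noteq> x"
      then consider "z < x" | "x < z"
        by linarith
      then show False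
      proof cases
        case 1
        with z have "g x < g z"
          by (intro decr) auto
        with x(3) z show False
          by simp
      next
        case 2
        with x(1) have "g z < g x"
          by (intro decr) auto
        with x(3) z show False
          by simp
      qed
    qed
  qed (use x x_pos in simp)
qed

locale antitone_kernel =
  fixes k :: "real \<Rightarrow> real"
  assumes borel_measurable_kernel[measurable]: "k \<in> borel_measurable borel"
    and kernel_nonneg: "\<And>a. 0 \<le> k a"
    and kernel_eq_0_neg: "\<And>a. a < 0 \<Longrightarrow> k a = 0"
    and integrable_kernel: "integrable lborel k"
    and integral_kernel_pos: "integral\<^sup>L lborel k > 0"
    and kernel_antimono: "\<And>a b. 0 < a \<Longrightarrow> a \<le> b \<Longrightarrow> k b \<le> k a"
begin

definition laplace :: "real \<Rightarrow> real" where
  "laplace y = (\<integral>a. exp (- (a * y)) * k a \<partial>lborel)"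

lemma laplace_integrand_antimono:
  assumes "0 \<le> y" "y \<le> z"
  shows "exp (- (a * z)) * k a \<le> exp (- (a * y)) * k a"
proof (cases "a < 0")
  case False
  then have "- (a * z) \<le> - (a * y)"
    using assms by (simp add: mult_left_mono)
  then show ?thesis
    using kernel_nonneg[of a] by (intro mult_right_mono) auto
qed (simp add: kernel_eq_0_neg)

lemma laplace_integrand_le_kernel: "0 \<le> y \<Longrightarrow> norm (exp (- (a * y)) * k a) \<le> norm (k a)"
  using laplace_integrand_antimono[of 0 y a] kernel_nonneg[of a] by simp

lemma integrable_laplace_integrand: "0 \<le> y \<Longrightarrow> integrable lborel (\<lambda>a. exp (- (a * y)) * k a)"
  by (rule Bochner_Integration.integrable_bound[OF integrable_kernel _ AE_I2[OF laplace_integrand_le_kernel]])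
     simp_all

lemma laplace_nonneg: "0 \<le> laplace y"
  unfolding laplace_def by (intro Bochner_Integration.integral_nonneg) (simp add: kernel_nonneg)

lemma continuous_on_laplace: "continuous_on {0..} laplace"
proof (rule continuous_on_sequentiallyI)
  fix u :: "nat \<Rightarrow> real" and y
  assume u: "\<forall>n. u n \<in> {0..}" "u \<longlonglongrightarrow> y"
  show "(\<lambda>n. laplace (u n)) \<longlonglongrightarrow> laplace y"
    unfolding laplace_def
  proof (rule integral_dominated_convergence[where w = k])
    show "AE a in lborel. (\<lambda>n. exp (- (a * u n)) * k a) \<longlonglongrightarrow> exp (- (a * y)) * k a"
      using u(2) by (intro AE_I2 tendsto_intros)
    show "AE a in lborel. norm (exp (- (a * u n)) * k a) \<le> k a" for n
      using u(1) laplace_integrand_le_kernel kernel_nonneg by auto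
  qed (simp_all add: integrable_kernel)
qed

lemma laplace_tendsto_0: "(laplace \<longlongrightarrow> 0) at_top"
proof -
  have "AE a in lborel. ((\<lambda>y. exp (- (a * y)) * k a) \<longlongrightarrow> 0) at_top"
    using AE_lborel_singleton[of 0]
  proof eventually_elim
    case (elim a)
    show ?case
    proof (cases "a < 0")
      case False
      with elim have "0 < a"
        by simp
      then have "((\<lambda>y. exp (- (a * y))) \<longlongrightarrow> 0) at_top"
        using filterlim_compose[OF exp_at_bot
            filterlim_uminus_at_top[THEN iffD1, OF filterlim_scale_at_top]] by simp
      then show ?thesis
        by (rule tendsto_mult_left_zero)
    qed (simp add: kernel_eq_0_neg)
  qed
  moreover have "\<forall>\<^sub>F y in at_top. AE a in lborel. norm (exp (- (a * y)) * k a) \<le> k a"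
    using eventually_ge_at_top[of "0::real"]
    by eventually_elim (use laplace_integrand_le_kernel kernel_nonneg in auto)
  ultimately show ?thesis
    using integral_dominated_convergence_at_top[of "\<lambda>_. 0" lborel "\<lambda>y a. exp (- (a * y)) * k a" k]
      integrable_kernel by (simp add: laplace_def[abs_def])
qed

lemma laplace_strict_antimono:
  assumes "0 \<le> y" "y < z"
  shows "laplace z < laplace y"
  unfolding laplace_def
proof (rule integral_less_if_not_AE_eq)
  show "\<not> (AE a in lborel. exp (- (a * z)) * k a = exp (- (a * y)) * k a)"
  proof
    assume "AE a in lborel. exp (- (a * z)) * k a = exp (- (a * y)) * k a"
    then have "AE a in lborel. k a = 0"
      using AE_lborel_singleton[of 0]
    proof eventually_elim
      case (elim a)
      show ?case
      proof (cases "a < 0")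
        case False
        with elim(2) assms have "exp (- (a * z)) \<noteq> exp (- (a * y))"
          by simp
        with elim(1) show ?thesis
          by simp
      qed (simp add: kernel_eq_0_neg)
    qed
    then have "integral\<^sup>L lborel k = 0"
      using integral_cong_AE[of k lborel "\<lambda>_. 0"] by simp
    with integral_kernel_pos show False
      by simp
  qed
qed (use assms in \<open>simp_all add: integrable_laplace_integrand laplace_integrand_antimono\<close>)

lemma laplace_less_imp_less: "0 \<le> y \<Longrightarrow> 0 \<le> z \<Longrightarrow> laplace z < laplace y \<Longrightarrow> y < z"
  using laplace_strict_antimono[of z y] by (cases y z rule: linorder_cases) auto

lemma integral_kernel_rescaled:
  assumes "0 < y"
  shows "integrable lborel (\<lambda>u. k (u / y))" "(\<integral>u. k (u / y) \<partial>lborel) = y * integral\<^sup>L lborel k"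
proof -
  show "integrable lborel (\<lambda>u. k (u / y))"
    using lborel_integrable_real_affine[OF integrable_kernel, of "1 / y" 0] assms by simp
  have "(\<integral>u. k (u / y) \<partial>lborel) = \<bar>y\<bar> *\<^sub>R (\<integral>x. k ((0 + y * x) / y) \<partial>lborel)"
    using assms by (intro lborel_integral_real_affine) simp
  then show "(\<integral>u. k (u / y) \<partial>lborel) = y * integral\<^sup>L lborel k"
    using assms by simp
qed

lemma scaled_laplace_eq:
  assumes "0 < y"
  shows "integrable lborel (\<lambda>u. exp (- u) * k (u / y))"
    "y * laplace y = (\<integral>u. exp (- u) * k (u / y) \<partial>lborel)"
proof -
  have subst: "(\<lambda>x. exp (- ((0 + 1 / y * x) * y)) * k (0 + 1 / y * x)) = (\<lambda>u. exp (- u) * k (u / y))"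
    using assms by (auto simp: field_simps)
  show "integrable lborel (\<lambda>u. exp (- u) * k (u / y))"
    using lborel_integrable_real_affine[OF integrable_laplace_integrand[of y], of "1 / y" 0] assms subst
    by simp
  have "laplace y = \<bar>1 / y\<bar> *\<^sub>R (\<integral>x. exp (- ((0 + 1 / y * x) * y)) * k (0 + 1 / y * x) \<partial>lborel)"
    unfolding laplace_def using assms by (intro lborel_integral_real_affine) simp
  then show "y * laplace y = (\<integral>u. exp (- u) * k (u / y) \<partial>lborel)"
    using assms subst by simp
qed

lemma scaled_laplace_strict_mono:
  assumes "0 < y" "y < z"
  shows "y * laplace y < z * laplace z"
proof -
  have "0 < z"
    using assms by simp
  have kernel_le: "k (u / y) \<le> k (u / z)" if "0 < u" for u
    using assms that by (intro kernel_antimono) (auto simp: divide_left_mono)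
  have "(\<integral>u. exp (- u) * k (u / y) \<partial>lborel) < (\<integral>u. exp (- u) * k (u / z) \<partial>lborel)"
  proof (rule integral_less_if_not_AE_eq)
    show "exp (- u) * k (u / y) \<le> exp (- u) * k (u / z)" for u
      using kernel_le[of u] kernel_eq_0_neg[of "u / y"] kernel_eq_0_neg[of "u / z"] assms \<open>0 < z\<close>
      by (cases u "0::real" rule: linorder_cases) (auto simp: divide_neg_pos)
    show "\<not> (AE u in lborel. exp (- u) * k (u / y) = exp (- u) * k (u / z))"
    proof
      assume "AE u in lborel. exp (- u) * k (u / y) = exp (- u) * k (u / z)"
      then have "(\<integral>u. k (u / y) \<partial>lborel) = (\<integral>u. k (u / z) \<partial>lborel)"
        by (intro integral_cong_AE) (auto elim: AE_mp)
      then have "y * integral\<^sup>L lborel k = z * integral\<^sup>L lborel k"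
        using integral_kernel_rescaled(2) assms \<open>0 < z\<close> by simp
      with integral_kernel_pos assms show False
        by simp
    qed
  qed (use assms \<open>0 < z\<close> scaled_laplace_eq(1) in auto)
  then show ?thesis
    using scaled_laplace_eq(2) assms \<open>0 < z\<close> by simp
qed

definition endemic_rhs :: "real \<Rightarrow> real \<Rightarrow> real \<Rightarrow> real" where
  "endemic_rhs \<theta> p x =
     (p * \<theta> * laplace (\<theta> * x) + (1 + p) * (1 - \<theta>) * laplace ((1 + p) * x)) / (1 + p - \<theta>)"

definition endemic_root :: "real \<Rightarrow> real \<Rightarrow> real" where
  "endemic_root \<theta> p = (THE x. x > 0 \<and> 1 = endemic_rhs \<theta> p x)"

definition laplace_root :: real where
  "laplace_root = (THE x. x > 0 \<and> 1 = laplace x)"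

lemma endemic_rhs_1: "0 < p \<Longrightarrow> endemic_rhs 1 p = laplace"
  by (simp add: endemic_rhs_def fun_eq_iff)

lemma endemic_rhs_0: "0 < \<theta> \<Longrightarrow> \<theta> \<le> 1 \<Longrightarrow> 0 < p \<Longrightarrow> endemic_rhs \<theta> p 0 = laplace 0"
  unfolding endemic_rhs_def by (simp add: field_simps)

lemma endemic_rhs_split:
  "endemic_rhs \<theta> p x = p * \<theta> / (1 + p - \<theta>) * laplace (\<theta> * x)
     + (1 + p) * (1 - \<theta>) / (1 + p - \<theta>) * laplace ((1 + p) * x)"
  unfolding endemic_rhs_def by (simp add: add_divide_distrib)

lemma continuous_on_endemic_rhs:
  assumes "0 < \<theta>" "\<theta> \<le> 1" "0 < p"
  shows "continuous_on {0..} (endemic_rhs \<theta> p)"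
proof -
  have "continuous_on {0..} (\<lambda>x. laplace (c * x))" if "0 \<le> c" for c
    by (rule continuous_on_compose2[OF continuous_on_laplace])
       (use that in \<open>auto intro!: continuous_intros\<close>)
  then show ?thesis
    unfolding endemic_rhs_def[abs_def] using assms by (intro continuous_intros) auto
qed

lemma endemic_rhs_strict_antimono:
  assumes "0 < \<theta>" "\<theta> \<le> 1" "0 < p" "0 \<le> x" "x < y"
  shows "endemic_rhs \<theta> p y < endemic_rhs \<theta> p x"
proof -
  have "p * \<theta> * laplace (\<theta> * y) < p * \<theta> * laplace (\<theta> * x)"
    using assms laplace_strict_antimono[of "\<theta> * x" "\<theta> * y"] by simp
  moreover have "(1 + p) * (1 - \<theta>) * laplace ((1 + p) * y) \<le> (1 + p) * (1 - \<theta>) * laplace ((1 + p) * x)"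
    using assms laplace_strict_antimono[of "(1 + p) * x" "(1 + p) * y"]
    by (intro mult_left_mono) auto
  ultimately have "p * \<theta> * laplace (\<theta> * y) + (1 + p) * (1 - \<theta>) * laplace ((1 + p) * y)
      < p * \<theta> * laplace (\<theta> * x) + (1 + p) * (1 - \<theta>) * laplace ((1 + p) * x)"
    by (rule add_less_le_mono)
  then show ?thesis
    unfolding endemic_rhs_def using assms by (intro divide_strict_right_mono) auto
qed

lemma endemic_rhs_tendsto_0:
  assumes "0 < \<theta>" "\<theta> \<le> 1" "0 < p"
  shows "(endemic_rhs \<theta> p \<longlongrightarrow> 0) at_top"
proof -
  have "((\<lambda>x. laplace (c * x)) \<longlongrightarrow> 0) at_top" if "0 < c" for c
    by (rule filterlim_compose[OF laplace_tendsto_0 filterlim_scale_at_top[OF that]])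
  then have "((\<lambda>x. (p * \<theta> * laplace (\<theta> * x) + (1 + p) * (1 - \<theta>) * laplace ((1 + p) * x))
      / (1 + p - \<theta>)) \<longlongrightarrow> (p * \<theta> * 0 + (1 + p) * (1 - \<theta>) * 0) / (1 + p - \<theta>)) at_top"
    using assms by (intro tendsto_intros) auto
  then show ?thesis
    unfolding endemic_rhs_def[abs_def] by simp
qed

lemma endemic_root_1: "0 < p \<Longrightarrow> endemic_root 1 p = laplace_root"
  by (simp add: endemic_root_def laplace_root_def endemic_rhs_1)

context
  assumes R_gt_1: "laplace 0 > 1"
begin

lemma endemic_root:
  assumes "0 < \<theta>" "\<theta> \<le> 1" "0 < p"
  shows "endemic_root \<theta> p > 0" "endemic_rhs \<theta> p (endemic_root \<theta> p) = 1"
proof -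
  have "\<exists>!x. x > 0 \<and> 1 = endemic_rhs \<theta> p x"
    using assms R_gt_1
    by (intro ex1_crossing_strict_decreasing[where d = 0] continuous_on_endemic_rhs endemic_rhs_tendsto_0)
       (auto simp: endemic_rhs_strict_antimono endemic_rhs_0)
  then have "endemic_root \<theta> p > 0 \<and> 1 = endemic_rhs \<theta> p (endemic_root \<theta> p)"
    unfolding endemic_root_def by (rule theI')
  then show "endemic_root \<theta> p > 0" "endemic_rhs \<theta> p (endemic_root \<theta> p) = 1"
    by simp_all
qed

lemma laplace_root: "laplace_root > 0" "laplace laplace_root = 1"
  using endemic_root[of 1 1] by (simp_all add: endemic_root_def laplace_root_def endemic_rhs_1)

lemma endemic_root_limit_cases:
  assumes \<theta>: "0 < \<theta>" "\<theta> \<le> 1" and lim: "(endemic_root \<theta> \<longlongrightarrow> L) at_top"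
  shows "(L = 0 \<and> \<theta> * laplace 0 \<le> 1) \<or> (L > 0 \<and> \<theta> * laplace (\<theta> * L) = 1)"
proof -
  define x where "x = endemic_root \<theta>"
  have ev_root: "\<forall>\<^sub>F p in at_top. x p > 0 \<and> endemic_rhs \<theta> p (x p) = 1"
    using eventually_gt_at_top[of 0] by eventually_elim (simp add: x_def endemic_root \<theta>)
  have "L \<ge> 0"
    using ev_root by (intro tendsto_lowerbound[OF lim[folded x_def]]) (auto elim: eventually_mono)
  define c1 where "c1 p = p * \<theta> / (1 + p - \<theta>)" for p
  define c2 where "c2 p = (1 + p) * (1 - \<theta>) / (1 + p - \<theta>)" for p
  have rhs: "endemic_rhs \<theta> p y = c1 p * laplace (\<theta> * y) + c2 p * laplace ((1 + p) * y)" for p y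
    unfolding c1_def c2_def by (rule endemic_rhs_split)
  have c1: "(c1 \<longlongrightarrow> \<theta>) at_top" and c2: "(c2 \<longlongrightarrow> 1 - \<theta>) at_top"
    unfolding c1_def[abs_def] c2_def[abs_def] by (fact vaccination_coefficients_tendsto)+
  have first: "((\<lambda>p. c1 p * laplace (\<theta> * x p)) \<longlongrightarrow> \<theta> * laplace (\<theta> * L)) at_top"
    using ev_root \<open>L \<ge> 0\<close> \<theta>
    by (intro tendsto_mult c1 continuous_on_tendsto_compose[OF continuous_on_laplace]
        tendsto_mult_left[OF lim[folded x_def]]) (auto elim: eventually_mono)
  show ?thesis
  proof (cases "L = 0")
    case True
    have "\<forall>\<^sub>F p in at_top. c1 p * laplace (\<theta> * x p) \<le> 1"
      using ev_root eventually_gt_at_top[of 0]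
    proof eventually_elim
      case (elim p)
      have "0 \<le> c2 p * laplace ((1 + p) * x p)"
        using elim \<theta> by (simp add: c2_def laplace_nonneg)
      with elim show ?case
        using rhs[of p "x p"] by linarith
    qed
    with first have "\<theta> * laplace (\<theta> * L) \<le> 1"
      by (rule tendsto_upperbound) simp
    with True show ?thesis
      by simp
  next
    case False
    with \<open>L \<ge> 0\<close> have "L > 0"
      by simp
    have "filterlim (\<lambda>p. x p * (1 + p)) at_top at_top"
      using lim[folded x_def] \<open>L > 0\<close>
      by (rule filterlim_tendsto_pos_mult_at_top[OF _ _ filterlim_tendsto_add_at_top[OF tendsto_const filterlim_ident]])
    then have "((\<lambda>p. laplace ((1 + p) * x p)) \<longlongrightarrow> 0) at_top"
      by (intro filterlim_compose[OF laplace_tendsto_0]) (simp add: mult.commute)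
    then have "((\<lambda>p. endemic_rhs \<theta> p (x p)) \<longlongrightarrow> \<theta> * laplace (\<theta> * L) + (1 - \<theta>) * 0) at_top"
      unfolding rhs by (rule tendsto_add[OF first tendsto_mult[OF c2]])
    moreover have "((\<lambda>p. endemic_rhs \<theta> p (x p)) \<longlongrightarrow> 1) at_top"
      using ev_root by (auto intro: tendsto_eventually elim: eventually_mono)
    ultimately have "\<theta> * laplace (\<theta> * L) + (1 - \<theta>) * 0 = 1"
      by (rule tendsto_unique[OF trivial_limit_at_top_linorder])
    with \<open>L > 0\<close> show ?thesis
      by simp
  qed
qed

lemma threshold_bounds: "0 < 1 / laplace 0" "1 / laplace 0 < 1"
  using R_gt_1 by simp_all

lemma limit_below_threshold:
  assumes "0 < \<theta>" "\<theta> \<le> 1 / laplace 0" and lim: "(endemic_root \<theta> \<longlongrightarrow> L) at_top"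
  shows "L = 0"
proof -
  have "\<theta> * laplace 0 \<le> 1"
    using assms(2) R_gt_1 by (simp add: le_divide_eq mult.commute)
  have "\<theta> \<le> 1"
    using assms(2) threshold_bounds by linarith
  with endemic_root_limit_cases[OF assms(1) _ lim]
  consider "L = 0" | "L > 0" "\<theta> * laplace (\<theta> * L) = 1"
    by blast
  then show "L = 0"
  proof cases
    case 2
    then have "\<theta> * laplace (\<theta> * L) < \<theta> * laplace 0"
      using assms(1) by (intro mult_strict_left_mono laplace_strict_antimono) auto
    with 2 \<open>\<theta> * laplace 0 \<le> 1\<close> show ?thesis
      by simp
  qed
qed

lemma limit_above_threshold:
  assumes "1 / laplace 0 < \<theta>" "\<theta> \<le> 1" and lim: "(endemic_root \<theta> \<longlongrightarrow> L) at_top"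
  shows "L > 0" "\<theta> * laplace (\<theta> * L) = 1"
proof -
  have "0 < \<theta>"
    using assms(1) threshold_bounds by linarith
  moreover have "1 < \<theta> * laplace 0"
    using assms(1) R_gt_1 by (simp add: divide_less_eq mult.commute)
  ultimately show "L > 0" "\<theta> * laplace (\<theta> * L) = 1"
    using endemic_root_limit_cases[OF _ assms(2) lim] by auto
qed

end

lemma limit_at_1:
  assumes "(endemic_root 1 \<longlongrightarrow> L) at_top"
  shows "L = laplace_root"
proof -
  have "\<forall>\<^sub>F p in at_top. endemic_root 1 p = laplace_root"
    using eventually_gt_at_top[of 0] by eventually_elim (rule endemic_root_1)
  then have "(endemic_root 1 \<longlongrightarrow> laplace_root) at_top"
    by (rule tendsto_eventually)
  with assms show ?thesis
    by (rule tendsto_unique[OF trivial_limit_at_top_linorder])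
qed

lemma limit_equation_solution_strict_mono:
  assumes "0 < a" "a < b" "0 < La" "0 < Lb"
    and a: "a * laplace (a * La) = 1" and b: "b * laplace (b * Lb) = 1"
  shows "La < Lb"
proof -
  have "laplace (a * La) = 1 / a" "laplace (b * Lb) = 1 / b"
    using a b assms(1,2) by (simp_all add: field_simps)
  moreover have "1 / b < 1 / a"
    using assms(1,2) by (intro frac_less2) auto
  ultimately have "laplace (b * Lb) < laplace (a * La)"
    by simp
  moreover have "0 \<le> a * La" "0 \<le> b * Lb"
    using assms(1-4) by simp_all
  ultimately have "a * La < b * Lb"
    by (simp add: laplace_less_imp_less)
  then have "(a * La) * laplace (a * La) < (b * Lb) * laplace (b * Lb)"
    using assms(1,3) by (intro scaled_laplace_strict_mono) simp_all
  moreover have "(c * L) * laplace (c * L) = L" if "c * laplace (c * L) = 1" for c L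
  proof -
    have "(c * L) * laplace (c * L) = L * (c * laplace (c * L))"
      by (simp only: ac_simps)
    with that show ?thesis
      by simp
  qed
  ultimately show ?thesis
    using a b by simp
qed

theorem vaccination_limit:
  assumes R_gt_1: "laplace 0 > 1"
    and lim: "\<And>\<theta>. 0 < \<theta> \<Longrightarrow> \<theta> \<le> 1 \<Longrightarrow> (endemic_root \<theta> \<longlongrightarrow> L \<theta>) at_top"
  shows "(\<forall>\<theta>. 0 < \<theta> \<and> \<theta> \<le> 1 / laplace 0 \<longrightarrow> L \<theta> = 0)
       \<and> (\<forall>\<theta>. 1 / laplace 0 < \<theta> \<and> \<theta> < 1 \<longrightarrow> L \<theta> \<noteq> 0)
       \<and> L 1 = laplace_root
       \<and> strict_mono_on {1 / laplace 0 <..< 1} L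
       \<and> (\<forall>\<theta>. 1 / laplace 0 < \<theta> \<and> \<theta> < 1 \<longrightarrow> 0 < L \<theta> \<and> L \<theta> < laplace_root)"
proof -
  note above = limit_above_threshold[OF R_gt_1 _ _ lim]
  have pos: "0 < \<theta>" if "1 / laplace 0 < \<theta>" for \<theta>
    using that threshold_bounds[OF R_gt_1] by linarith
  have L1: "L 1 = laplace_root"
    using lim[of 1] by (simp add: limit_at_1)
  have less_root: "L \<theta> < laplace_root" if "1 / laplace 0 < \<theta>" "\<theta> < 1" for \<theta>
    by (rule limit_equation_solution_strict_mono[of \<theta> 1])
       (use that pos above[of \<theta>] laplace_root[OF R_gt_1] in auto)
  have L_pos: "0 < L \<theta>" if "1 / laplace 0 < \<theta>" "\<theta> < 1" for \<theta>
    using that pos by (intro above(1)) auto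
  have mono: "L a < L b" if "1 / laplace 0 < a" "a < b" "b < 1" for a b
    by (rule limit_equation_solution_strict_mono[of a b]) (use that pos above[of a] above[of b] in auto)
  show ?thesis
  proof (intro conjI allI impI strict_mono_onI)
    fix \<theta> assume \<theta>: "0 < \<theta> \<and> \<theta> \<le> 1 / laplace 0"
    with threshold_bounds[OF R_gt_1] have "\<theta> \<le> 1"
      by linarith
    with \<theta> show "L \<theta> = 0"
      using limit_below_threshold[OF R_gt_1 _ _ lim] by blast
  next
    fix \<theta> assume "1 / laplace 0 < \<theta> \<and> \<theta> < 1"
    then show "L \<theta> \<noteq> 0" "0 < L \<theta>" "L \<theta> < laplace_root"
      using L_pos[of \<theta>] less_root[of \<theta>] by simp_all
  next
    show "L 1 = laplace_root"
      by (rule L1)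
  next
    fix a b assume "a \<in> {1 / laplace 0 <..< 1}" "b \<in> {1 / laplace 0 <..< 1}" "a < b"
    then show "L a < L b"
      by (intro mono) auto
  qed
qed

end


locale age_structure =
  fixes B :: real and Fs A :: "real \<Rightarrow> real"
  assumes B_pos: "B > 0"
    and Fs_range: "\<And>a. a \<ge> 0 \<Longrightarrow> 0 \<le> Fs a \<and> Fs a \<le> 1"
    and Fs_noninc: "\<And>a b. 0 \<le> a \<Longrightarrow> a \<le> b \<Longrightarrow> Fs b \<le> Fs a"
    and A_nonneg: "\<And>\<tau>. \<tau> \<ge> 0 \<Longrightarrow> A \<tau> \<ge> 0"
    and A_meas[measurable]: "A \<in> borel_measurable borel"
    and R_finite: "(\<integral>\<^sup>+ a\<in>{0..}. (\<integral>\<^sup>+ \<tau>\<in>{0..}. ennreal (Fs (a + \<tau>) * A \<tau>) \<partial>lborel) \<partial>lborel) < \<infinity>"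
    and R_gt_1: "f0 B Fs A > 1"
begin

text \<open>\<open>Fs\<close> is arbitrary on \<open>(-\<infinity>,0)\<close>; extended by \<open>1\<close> there it is monotone on all of \<open>\<real>\<close>,
  which is what makes it Borel measurable.\<close>

definition Fs_ext :: "real \<Rightarrow> real" where
  "Fs_ext t = (if 0 \<le> t then Fs t else 1)"

lemma borel_measurable_Fs_ext[measurable]: "Fs_ext \<in> borel_measurable borel"
proof -
  have "mono (\<lambda>t. - Fs_ext t)"
    using Fs_noninc Fs_range by (auto intro!: monoI simp: Fs_ext_def)
  then have "(\<lambda>t. - Fs_ext t) \<in> borel_measurable borel"
    by (rule borel_measurable_mono)
  then show ?thesis
    by simp
qed

definition age_integrand :: "real \<Rightarrow> real \<Rightarrow> real" where
  "age_integrand a \<tau> = indicator {0..} \<tau> * (Fs_ext (a + \<tau>) * A \<tau>)"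

definition age_integral :: "real \<Rightarrow> real" where
  "age_integral a = (\<integral>\<tau>. age_integrand a \<tau> \<partial>lborel)"

definition infection_kernel :: "real \<Rightarrow> real" where
  "infection_kernel a = B * (indicator {0..} a * age_integral a)"

lemma borel_measurable_age_integrand[measurable]:
  "case_prod age_integrand \<in> borel_measurable (lborel \<Otimes>\<^sub>M lborel)"
  "age_integrand a \<in> borel_measurable lborel"
  unfolding age_integrand_def by measurable

lemma borel_measurable_age_integral[measurable]: "age_integral \<in> borel_measurable borel"
  using lborel.borel_measurable_lebesgue_integral[OF borel_measurable_age_integrand(1)]
  by (simp add: age_integral_def[abs_def])

lemma age_integrand_nonneg: "0 \<le> age_integrand a \<tau>"
  using Fs_range[of "a + \<tau>"] A_nonneg[of \<tau>] by (auto simp: age_integrand_def Fs_ext_def indicator_def)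

lemma age_integrand_antimono:
  assumes "0 \<le> a" "a \<le> b"
  shows "age_integrand b \<tau> \<le> age_integrand a \<tau>"
proof (cases "0 \<le> \<tau>")
  case True
  with assms have "Fs (b + \<tau>) \<le> Fs (a + \<tau>)"
    by (intro Fs_noninc) auto
  with True assms A_nonneg[of \<tau>] show ?thesis
    by (simp add: age_integrand_def Fs_ext_def mult_right_mono)
qed (simp add: age_integrand_def)

lemma age_integral_nonneg: "0 \<le> age_integral a"
  unfolding age_integral_def by (intro Bochner_Integration.integral_nonneg age_integrand_nonneg)

lemma nn_integral_age_integrand_finite:
  "(\<integral>\<^sup>+ a. (\<integral>\<^sup>+ \<tau>. age_integrand a \<tau> \<partial>lborel) * indicator {0..} a \<partial>lborel) < \<infinity>"
proof -
  have "(\<integral>\<^sup>+ \<tau>. age_integrand a \<tau> \<partial>lborel) = (\<integral>\<^sup>+ \<tau>\<in>{0..}. ennreal (Fs (a + \<tau>) * A \<tau>) \<partial>lborel)"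
    if "0 \<le> a" for a
    using that by (intro nn_integral_cong) (auto simp: age_integrand_def Fs_ext_def indicator_def)
  then have "(\<integral>\<^sup>+ a. (\<integral>\<^sup>+ \<tau>. age_integrand a \<tau> \<partial>lborel) * indicator {0..} a \<partial>lborel)
      = (\<integral>\<^sup>+ a\<in>{0..}. (\<integral>\<^sup>+ \<tau>\<in>{0..}. ennreal (Fs (a + \<tau>) * A \<tau>) \<partial>lborel) \<partial>lborel)"
    by (intro nn_integral_cong) (auto simp: indicator_def)
  with R_finite show ?thesis
    by simp
qed

text \<open>The inner integral is nonincreasing in \<open>a\<close> and integrable over \<open>[0,\<infinity>)\<close>,
  so it cannot be infinite at any \<open>a > 0\<close>.\<close>

lemma integrable_age_integrand:
  assumes "0 < a"
  shows "integrable lborel (age_integrand a)"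
proof (rule integrableI_nonneg)
  let ?N = "\<lambda>a. \<integral>\<^sup>+ \<tau>. age_integrand a \<tau> \<partial>lborel"
  show "?N a < \<infinity>"
  proof (rule ccontr)
    assume "\<not> ?N a < \<infinity>"
    then have "?N a = \<infinity>"
      by (simp add: less_top[symmetric])
    have "?N a' = \<infinity>" if "a' \<in> {0<..a}" for a'
    proof -
      have "?N a \<le> ?N a'"
        using that by (intro nn_integral_mono ennreal_leI age_integrand_antimono) auto
      with \<open>?N a = \<infinity>\<close> show ?thesis
        by (simp add: top_unique)
    qed
    then have "(\<integral>\<^sup>+ a'. \<infinity> * indicator {0<..a} a' \<partial>lborel) \<le> (\<integral>\<^sup>+ a'. ?N a' * indicator {0..} a' \<partial>lborel)"
      by (intro nn_integral_mono) (auto simp: indicator_def)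
    with nn_integral_age_integrand_finite have "\<infinity> * emeasure lborel {0<..a} < \<infinity>"
      by (simp add: nn_integral_cmult_indicator)
    with assms show False
      by (simp add: ennreal_mult_top)
  qed
qed (simp_all add: age_integrand_nonneg)

lemma integrable_infection_kernel: "integrable lborel infection_kernel"
proof -
  have "ennreal (age_integral a) \<le> (\<integral>\<^sup>+ \<tau>. age_integrand a \<tau> \<partial>lborel)" for a
    unfolding age_integral_def
    by (subst integral_eq_nn_integral) (auto simp: age_integrand_nonneg ennreal_enn2real_if)
  then have "(\<integral>\<^sup>+ a. ennreal (indicator {0..} a * age_integral a) \<partial>lborel)
      \<le> (\<integral>\<^sup>+ a. (\<integral>\<^sup>+ \<tau>. age_integrand a \<tau> \<partial>lborel) * indicator {0..} a \<partial>lborel)"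
    by (intro nn_integral_mono) (simp add: indicator_def)
  with nn_integral_age_integrand_finite
  have "integrable lborel (\<lambda>a. indicator {0..} a * age_integral a)"
    by (intro integrableI_nonneg) (auto simp: age_integral_nonneg)
  then show ?thesis
    unfolding infection_kernel_def by simp
qed

lemma dbl_eq_integral_infection_kernel: "B * dbl Fs A w = (\<integral>a. w a * infection_kernel a \<partial>lborel)"
proof -
  have "dbl Fs A w = (\<integral>a. w a * (indicator {0..} a * age_integral a) \<partial>lborel)"
    unfolding dbl_def set_lebesgue_integral_def
  proof (intro Bochner_Integration.integral_cong refl)
    fix a :: real
    have "0 \<le> a \<Longrightarrow> (\<lambda>\<tau>. indicator {0..} \<tau> *\<^sub>R (w a * Fs (a + \<tau>) * A \<tau>)) = (\<lambda>\<tau>. w a * age_integrand a \<tau>)"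
      by (auto simp: age_integrand_def Fs_ext_def indicator_def fun_eq_iff)
    then show "indicator {0..} a *\<^sub>R (\<integral>\<tau>. indicator {0..} \<tau> *\<^sub>R (w a * Fs (a + \<tau>) * A \<tau>) \<partial>lborel)
        = w a * (indicator {0..} a * age_integral a)"
      by (cases "0 \<le> a") (simp_all add: age_integral_def)
  qed
  then show ?thesis
    unfolding infection_kernel_def by (simp add: mult.left_commute)
qed

lemma f0_eq_integral_infection_kernel: "f0 B Fs A = integral\<^sup>L lborel infection_kernel"
  unfolding f0_def dbl_eq_integral_infection_kernel by simp

sublocale antitone_kernel infection_kernel
proof
  show "infection_kernel \<in> borel_measurable borel"
    unfolding infection_kernel_def by measurable
  show "0 \<le> infection_kernel a" for a
    using B_pos age_integral_nonneg[of a] by (simp add: infection_kernel_def)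
  show "infection_kernel a = 0" if "a < 0" for a
    using that by (simp add: infection_kernel_def)
  show "integrable lborel infection_kernel"
    by (rule integrable_infection_kernel)
  show "integral\<^sup>L lborel infection_kernel > 0"
    using R_gt_1 f0_eq_integral_infection_kernel by simp
  show "infection_kernel b \<le> infection_kernel a" if "0 < a" "a \<le> b" for a b
  proof -
    have "age_integral b \<le> age_integral a"
      unfolding age_integral_def using that
      by (intro integral_mono integrable_age_integrand age_integrand_antimono) auto
    with that B_pos show ?thesis
      by (simp add: infection_kernel_def)
  qed
qed

lemma f0_eq_laplace: "f0 B Fs A = laplace 0"
  by (simp add: f0_eq_integral_infection_kernel laplace_def)

lemma Fvac_eq_endemic_root:
  assumes "0 < \<theta>" "\<theta> \<le> 1" "0 < p"
  shows "Fvac B Fs A \<theta> p = endemic_root \<theta> p"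
proof -
  have rhs: "B / (1 + p - \<theta>) * dbl Fs A (\<lambda>a. p * \<theta> * exp (- \<theta> * a * x)
      + (1 + p) * (1 - \<theta>) * exp (- (1 + p) * a * x)) = endemic_rhs \<theta> p x" if "0 \<le> x" for x
  proof -
    have "B * dbl Fs A (\<lambda>a. p * \<theta> * exp (- \<theta> * a * x) + (1 + p) * (1 - \<theta>) * exp (- (1 + p) * a * x))
        = (\<integral>a. p * \<theta> * (exp (- (a * (\<theta> * x))) * infection_kernel a)
             + (1 + p) * (1 - \<theta>) * (exp (- (a * ((1 + p) * x))) * infection_kernel a) \<partial>lborel)"
      unfolding dbl_eq_integral_infection_kernel by (rule Bochner_Integration.integral_cong) (auto simp: algebra_simps)
    also have "\<dots> = p * \<theta> * laplace (\<theta> * x) + (1 + p) * (1 - \<theta>) * laplace ((1 + p) * x)"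
      using assms that by (simp add: laplace_def integrable_laplace_integrand)
    finally show ?thesis
      by (simp add: endemic_rhs_def)
  qed
  show ?thesis
    unfolding Fvac_def endemic_root_def
    by (intro arg_cong[where f = The] ext conj_cong refl) (simp only: rhs less_imp_le)
qed

lemma Fstar_eq_laplace_root: "Fstar B Fs A = laplace_root"
proof -
  have "B * dbl Fs A (\<lambda>a. exp (- a * x)) = laplace x" for x
    unfolding dbl_eq_integral_infection_kernel laplace_def by simp
  then show ?thesis
    unfolding Fstar_def laplace_root_def by simp
qed

end


theorem mainTheorem2:
  fixes B :: real and Fs A Finf :: "real \<Rightarrow> real"
  assumes B_pos: "B > 0"
    and Fs_range: "\<And>a. a \<ge> 0 \<Longrightarrow> 0 \<le> Fs a \<and> Fs a \<le> 1"
    and Fs_noninc: "\<And>a b. 0 \<le> a \<Longrightarrow> a \<le> b \<Longrightarrow> Fs b \<le> Fs a"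
    and Fs_0: "Fs 0 = 1"
    and A_nonneg: "\<And>\<tau>. \<tau> \<ge> 0 \<Longrightarrow> A \<tau> \<ge> 0"
    and A_meas: "A \<in> borel_measurable borel"
    and R_finite: "(\<integral>\<^sup>+ a\<in>{0..}. (\<integral>\<^sup>+ \<tau>\<in>{0..}. ennreal (Fs (a + \<tau>) * A \<tau>) \<partial>lborel) \<partial>lborel) < \<infinity>"
    and R_gt1: "f0 B Fs A > 1"
    and lim: "\<And>\<theta>. 0 < \<theta> \<Longrightarrow> \<theta> \<le> 1 \<Longrightarrow> ((\<lambda>p. Fvac B Fs A \<theta> p) \<longlongrightarrow> Finf \<theta>) at_top"
  shows "(\<forall>\<theta>. 0 < \<theta> \<and> \<theta> \<le> 1 / f0 B Fs A \<longrightarrow> Finf \<theta> = 0)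
       \<and> (\<forall>\<theta>. 1 / f0 B Fs A < \<theta> \<and> \<theta> < 1 \<longrightarrow> Finf \<theta> \<noteq> 0)
       \<and> Finf 1 = Fstar B Fs A
       \<and> strict_mono_on {1 / f0 B Fs A <..< 1} Finf
       \<and> (\<forall>\<theta>. 1 / f0 B Fs A < \<theta> \<and> \<theta> < 1 \<longrightarrow> 0 < Finf \<theta> \<and> Finf \<theta> < Fstar B Fs A)"
proof -
  interpret age_structure B Fs A
    by unfold_locales (fact assms)+
  have "(endemic_root \<theta> \<longlongrightarrow> Finf \<theta>) at_top" if "0 < \<theta>" "\<theta> \<le> 1" for \<theta>
  proof -
    have "\<forall>\<^sub>F p in at_top. Fvac B Fs A \<theta> p = endemic_root \<theta> p"
      using eventually_gt_at_top[of 0] by eventually_elim (simp add: Fvac_eq_endemic_root that)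
    with lim[OF that] show ?thesis
      by (simp add: tendsto_cong)
  qed
  with R_gt1 show ?thesis
    unfolding f0_eq_laplace Fstar_eq_laplace_root by (rule vaccination_limit)
qed

end
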